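(* Fix $r\in[0,1]$ and consider the recombinator dynamics. Then: (1) (Trait payoff monotonicity) For every state $x\in\Delta(A)$, every dimension $d$, and every pair of traits $a_d,a'_d\in\operatorname{supp}_d(x)$, $$u_x(a_d)>u_x(a'_d)\iff\frac{\dot x(a_d)}{x(a_d)}>\frac{\dot x(a'_d)}{x(a'_d)},$$ where $\dot x(a_d)=\sum_{a_{-d}}\dot x(a_d,a_{-d})$. (2) A state $x$ is stationary if and only if both (a) $u_x(a_d)=u_x$ for every $d\in D$ and every $a_d\in\operatorname{supp}_d(x)$, and (b) $(1-r)\frac{u_x(a)}{u_x}+r\,m_x(a)=1$ for every $a\in\operatorname{supp}(x)$.
   Context: Setting: $D=\{1,\dots,|D|\}$ is a finite set of dimensions with $|D|\ge 2$; each $d\in D$ has a finite nonempty set of traits $A_d$; the set of types is $A=\prod_{d\in D}A_d$, a type being $a=(a_d)_{d\in D}$, and we write $a=(a_d,a_{-d})$ with $a_{-d}\in A_{-d}=\prod_{d'\ne d}A_{d'}$; "$a_d\in a$" means $a_d$ is the $d$-th component of $a$. A payoff function $u:A\times A\to\mathbb{R}_{>0}$ is given. A state is $x\in\Delta(A)$. Define $u_x(a)=\sum_{a'\in A}x(a')u(a,a')$ and $u_x=\sum_{a\in A}x(a)u_x(a)$. Marginals: $x(a_d)=\sum_{a_{-d}}x(a_d,a_{-d})$. Supports: $\operatorname{supp}(x)=\{a:x(a)>0\}$, $\operatorname{supp}_d(x)=\{a_d:x(a_d)>0\}$. For $x(a_d)>0$ the trait payoff is $u_x(a_d)=\frac{1}{x(a_d)}\sum_{a_{-d}}x(a_d,a_{-d})u_x(a_d,a_{-d})$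 (and $x(a_d)u_x(a_d)$ is understood as $\sum_{a_{-d}}x(a_d,a_{-d})u_x(a_d,a_{-d})$). The recombinator dynamics with recombination rate $r\in[0,1]$ is $$\dot x(a)=(1-r)\frac{x(a)u_x(a)}{u_x}+r\prod_{a_d\in a}\frac{x(a_d)u_x(a_d)}{u_x}-x(a),\qquad a\in A.$$ A state is stationary if $\dot x(a)=0$ for all $a$. For $a\in\operatorname{supp}(x)$, the trait-to-type ratio is $m_x(a)=\frac{\prod_{a_d\in a}x(a_d)}{x(a)}$. *)

theory Defs
  imports Complex_Main "HOL-Library.FuncSet"
begin

(* Dimensions: D = {1..n}. Traits of dimension d: At d.
   Types: A = PiE {1..n} At (functions a with a d \<in> At d for d \<in> D, undefined elsewhere).
   A state x : types \<Rightarrow> real, considered on A. *)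

definition types :: "nat \<Rightarrow> (nat \<Rightarrow> 't set) \<Rightarrow> (nat \<Rightarrow> 't) set" where
  "types n At = PiE {1..n} At"

definition is_state :: "nat \<Rightarrow> (nat \<Rightarrow> 't set) \<Rightarrow> ((nat \<Rightarrow> 't) \<Rightarrow> real) \<Rightarrow> bool" where
  "is_state n At x \<longleftrightarrow> (\<forall>a\<in>types n At. x a \<ge> 0) \<and> (\<Sum>a\<in>types n At. x a) = 1"

definition upay where
  "upay n At u x a = (\<Sum>a'\<in>types n At. x a' * u a a')"

definition umean where
  "umean n At u x = (\<Sum>a\<in>types n At. x a * upay n At u x a)"

definition marg where
  "marg n At x d t = (\<Sum>a\<in>{a\<in>types n At. a d = t}. x a)"

text \<open>x(a_d) u_x(a_d), understood as the sum over a_{-d}\<close>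
definition wtrait where
  "wtrait n At u x d t = (\<Sum>a\<in>{a\<in>types n At. a d = t}. x a * upay n At u x a)"

text \<open>trait payoff u_x(a_d) (meaningful when x(a_d) > 0)\<close>
definition utrait where
  "utrait n At u x d t = wtrait n At u x d t / marg n At x d t"

definition xdot where
  "xdot n At u r x a =
     (1 - r) * (x a * upay n At u x a / umean n At u x)
     + r * (\<Prod>d\<in>{1..n}. wtrait n At u x d (a d) / umean n At u x)
     - x a"

definition xdot_trait where
  "xdot_trait n At u r x d t = (\<Sum>a\<in>{a\<in>types n At. a d = t}. xdot n At u r x a)"

definition stationary where
  "stationary n At u r x \<longleftrightarrow> (\<forall>a\<in>types n At. xdot n At u r x a = 0)"

definition mratio where
  "mratio n At x a = (\<Prod>d\<in>{1..n}. marg n At x d (a d)) / x a"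

end

theory Submission imports Defs begin

text \<open>
  Summing the dynamics over the types carrying a fixed trait \<open>t\<close> of dimension \<open>d\<close>, the
  recombination term factorises over the dimensions: every other dimension contributes
  \<open>\<Sum>\<^sub>s x(s) u\<^sub>x(s) / u\<^sub>x = 1\<close>, so it yields exactly the selection term \<open>x(t) u\<^sub>x(t) / u\<^sub>x\<close>.
  Hence \<open>\<dot>x(t) = x(t) (u\<^sub>x(t) / u\<^sub>x - 1)\<close> irrespective of \<open>r\<close>, which gives (1) and, at a
  stationary state, (a). Conversely, under (a) the product of the weighted trait frequencies
  becomes the product of the marginals, so \<open>\<dot>x(a) = x(a) ((1-r) u\<^sub>x(a)/u\<^sub>x + r m\<^sub>x(a) - 1)\<close>
  on the support; (b) makes this vanish, off the support \<open>\<dot>x(a) \<ge> 0\<close>, and since the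
  derivatives sum to zero all of them vanish.
\<close>

lemma PiE_fiber_eq:
  assumes "d \<in> I"
  shows "{a \<in> PiE I A. a d = t} = PiE I (A(d := A d \<inter> {t}))"
  using assms by (auto simp: PiE_iff extensional_def split: if_splits; metis)

lemma sum_PiE_fiber_prod:
  fixes g :: "'i \<Rightarrow> 'a \<Rightarrow> 'b::comm_semiring_1"
  assumes "finite I" "\<forall>i\<in>I. finite (A i)" "d \<in> I"
  shows "(\<Sum>a\<in>{a \<in> PiE I A. a d = t}. \<Prod>i\<in>I. g i (a i))
       = (\<Sum>s\<in>A d \<inter> {t}. g d s) * (\<Prod>i\<in>I - {d}. \<Sum>s\<in>A i. g i s)"
proof -
  let ?A' = "A(d := A d \<inter> {t})"
  have "(\<Sum>a\<in>{a \<in> PiE I A. a d = t}. \<Prod>i\<in>I. g i (a i)) = (\<Prod>i\<in>I. \<Sum>s\<in>?A' i. g i s)"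
    unfolding PiE_fiber_eq[OF assms(3)] by (rule prod_sum_PiE[symmetric]) (use assms in auto)
  also have "\<dots> = (\<Sum>s\<in>?A' d. g d s) * (\<Prod>i\<in>I - {d}. \<Sum>s\<in>?A' i. g i s)"
    using assms by (simp add: prod.remove)
  also have "(\<Prod>i\<in>I - {d}. \<Sum>s\<in>?A' i. g i s) = (\<Prod>i\<in>I - {d}. \<Sum>s\<in>A i. g i s)"
    by (rule prod.cong) auto
  finally show ?thesis by simp
qed

locale recombinator_state =
  fixes n :: nat and At :: "nat \<Rightarrow> 't set"
    and u :: "(nat \<Rightarrow> 't) \<Rightarrow> (nat \<Rightarrow> 't) \<Rightarrow> real"
    and x :: "(nat \<Rightarrow> 't) \<Rightarrow> real"
  assumes dims: "n \<ge> 1"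
    and traits_finite: "\<forall>d\<in>{1..n}. finite (At d) \<and> At d \<noteq> {}"
    and payoff_pos: "\<forall>a\<in>types n At. \<forall>a'\<in>types n At. u a a' > 0"
    and state: "is_state n At x"
begin

abbreviation U where "U \<equiv> umean n At u x"

abbreviation fiber where "fiber d t \<equiv> {a \<in> types n At. a d = t}"

lemma finite_types: "finite (types n At)"
  unfolding types_def using traits_finite by (intro finite_PiE) auto

lemma state_nonneg: "a \<in> types n At \<Longrightarrow> x a \<ge> 0"
  using state unfolding is_state_def by auto

lemma marg_nonneg: "marg n At x d t \<ge> 0"
  unfolding marg_def using state_nonneg by (intro sum_nonneg) auto

lemma support_nonempty: obtains b where "b \<in> types n At" "x b > 0"
proof -
  have "\<not> (\<forall>a\<in>types n At. x a \<le> 0)"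
    using sum_nonpos[of "types n At" x] state unfolding is_state_def by auto
  then show ?thesis using that by force
qed

lemma upay_pos: "a \<in> types n At \<Longrightarrow> upay n At u x a > 0"
proof -
  assume a: "a \<in> types n At"
  obtain b where "b \<in> types n At" "x b > 0" by (rule support_nonempty)
  then show ?thesis
    unfolding upay_def using a payoff_pos state_nonneg
    by (intro sum_pos2[OF finite_types, of b]) (auto simp: less_imp_le zero_less_mult_iff zero_le_mult_iff)
qed

lemma umean_pos: "U > 0"
proof -
  obtain b where "b \<in> types n At" "x b > 0" by (rule support_nonempty)
  then show ?thesis
    unfolding umean_def using upay_pos state_nonneg
    by (intro sum_pos2[OF finite_types, of b]) (auto simp: less_imp_le zero_less_mult_iff zero_le_mult_iff)
qed

lemma sum_fibers:
  assumes "d \<in> {1..n}"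
  shows "(\<Sum>t\<in>At d. \<Sum>a\<in>fiber d t. f a) = (\<Sum>a\<in>types n At. f a)"
  using finite_types traits_finite assms by (intro sum.group) (auto simp: types_def PiE_iff)

lemma sum_wtrait: "d \<in> {1..n} \<Longrightarrow> (\<Sum>t\<in>At d. wtrait n At u x d t) = U"
  unfolding wtrait_def umean_def by (rule sum_fibers)

lemma sum_marg: "d \<in> {1..n} \<Longrightarrow> (\<Sum>t\<in>At d. marg n At x d t) = 1"
  using state unfolding marg_def is_state_def by (simp add: sum_fibers)

lemma wtrait_eq_0_if_marg_eq_0:
  assumes "marg n At x d t = 0"
  shows "wtrait n At u x d t = 0"
proof -
  have "\<forall>a\<in>fiber d t. x a = 0"
    using assms state_nonneg finite_types
    unfolding marg_def by (subst (asm) sum_nonneg_eq_0_iff) auto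
  then show ?thesis unfolding wtrait_def by simp
qed

lemma sum_fiber_recombination:
  assumes d: "d \<in> {1..n}"
  shows "(\<Sum>a\<in>fiber d t. \<Prod>i\<in>{1..n}. wtrait n At u x i (a i) / U) = wtrait n At u x d t / U"
proof -
  let ?g = "\<lambda>i s. wtrait n At u x i s / U"
  have "(\<Sum>a\<in>fiber d t. \<Prod>i\<in>{1..n}. ?g i (a i))
      = (\<Sum>s\<in>At d \<inter> {t}. ?g d s) * (\<Prod>i\<in>{1..n} - {d}. \<Sum>s\<in>At i. ?g i s)"
    unfolding types_def using traits_finite d by (intro sum_PiE_fiber_prod) auto
  also have "(\<Prod>i\<in>{1..n} - {d}. \<Sum>s\<in>At i. ?g i s) = 1"
    using umean_pos sum_wtrait by (intro prod.neutral) (auto simp: sum_divide_distrib[symmetric])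
  also have "(\<Sum>s\<in>At d \<inter> {t}. ?g d s) = ?g d t"
  proof (cases "t \<in> At d")
    case False
    have "fiber d t = {}" using d False by (auto simp: types_def PiE_iff)
    then have "wtrait n At u x d t = 0" unfolding wtrait_def by (simp only: sum.empty)
    with False show ?thesis by simp
  qed (simp add: insert_absorb)
  finally show ?thesis by simp
qed

lemma xdot_trait_eq:
  assumes d: "d \<in> {1..n}"
  shows "xdot_trait n At u r x d t = wtrait n At u x d t / U - marg n At x d t"
proof -
  have "xdot_trait n At u r x d t =
      (1 - r) * (\<Sum>a\<in>fiber d t. x a * upay n At u x a) / U
      + r * (\<Sum>a\<in>fiber d t. \<Prod>i\<in>{1..n}. wtrait n At u x i (a i) / U)
      - (\<Sum>a\<in>fiber d t. x a)"
    unfolding xdot_trait_def xdot_def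
    by (simp add: sum.distrib sum_subtractf sum_distrib_left sum_divide_distrib)
  also have "\<dots> = wtrait n At u x d t / U - marg n At x d t"
    unfolding sum_fiber_recombination[OF d] wtrait_def[symmetric] marg_def[symmetric]
    using umean_pos by (simp add: field_simps)
  finally show ?thesis .
qed

lemma sum_xdot_eq_0: "(\<Sum>a\<in>types n At. xdot n At u r x a) = 0"
proof -
  have d: "1 \<in> {1..n}" using dims by simp
  have "(\<Sum>a\<in>types n At. xdot n At u r x a) = (\<Sum>t\<in>At 1. xdot_trait n At u r x 1 t)"
    unfolding xdot_trait_def sum_fibers[OF d] ..
  also have "\<dots> = U / U - 1"
    using d by (simp add: xdot_trait_eq sum_subtractf sum_divide_distrib[symmetric] sum_wtrait sum_marg)
  finally show ?thesis using umean_pos by simp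
qed

lemma trait_growth_rate:
  assumes "d \<in> {1..n}" "marg n At x d t > 0"
  shows "xdot_trait n At u r x d t / marg n At x d t = utrait n At u x d t / U - 1"
  using assms umean_pos unfolding xdot_trait_eq[OF assms(1)] utrait_def
  by (simp add: field_simps)

lemma trait_payoff_monotone:
  assumes "d \<in> {1..n}" "marg n At x d t > 0" "marg n At x d t' > 0"
  shows "utrait n At u x d t > utrait n At u x d t' \<longleftrightarrow>
         xdot_trait n At u r x d t / marg n At x d t > xdot_trait n At u r x d t' / marg n At x d t'"
  using assms umean_pos by (simp add: trait_growth_rate divide_less_cancel)

text \<open>Condition (a), with the trait payoffs multiplied out so that it holds vacuously off the support.\<close>

lemma trait_payoffs_mean_iff:
  "(\<forall>d\<in>{1..n}. \<forall>t. marg n At x d t > 0 \<longrightarrow> utrait n At u x d t = U)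
   \<longleftrightarrow> (\<forall>d\<in>{1..n}. \<forall>t. wtrait n At u x d t = U * marg n At x d t)"
proof (intro ball_cong refl all_cong1)
  fix d t
  have "marg n At x d t > 0 \<or> marg n At x d t = 0"
    using marg_nonneg[of d t] by linarith
  then show "(marg n At x d t > 0 \<longrightarrow> utrait n At u x d t = U)
      \<longleftrightarrow> wtrait n At u x d t = U * marg n At x d t"
    using wtrait_eq_0_if_marg_eq_0 unfolding utrait_def by (auto simp: field_simps)
qed

lemma stationary_imp_trait_payoffs_mean:
  assumes "stationary n At u r x" "d \<in> {1..n}"
  shows "wtrait n At u x d t = U * marg n At x d t"
proof -
  have "xdot_trait n At u r x d t = 0"
    using assms(1) unfolding xdot_trait_def stationary_def by simp
  then show ?thesis using xdot_trait_eq[OF assms(2)] umean_pos by (simp add: field_simps)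
qed

lemma xdot_if_trait_payoffs_mean:
  assumes "\<forall>d\<in>{1..n}. \<forall>t. wtrait n At u x d t = U * marg n At x d t"
  shows "xdot n At u r x a
       = (1 - r) * (x a * upay n At u x a / U) + r * (\<Prod>i\<in>{1..n}. marg n At x i (a i)) - x a"
proof -
  have "(\<Prod>i\<in>{1..n}. wtrait n At u x i (a i) / U) = (\<Prod>i\<in>{1..n}. marg n At x i (a i))"
    using assms umean_pos by (intro prod.cong) auto
  then show ?thesis unfolding xdot_def by simp
qed

lemma xdot_eq_0_iff_type_condition:
  assumes "\<forall>d\<in>{1..n}. \<forall>t. wtrait n At u x d t = U * marg n At x d t" "x a > 0"
  shows "xdot n At u r x a = 0 \<longleftrightarrow> (1 - r) * (upay n At u x a / U) + r * mratio n At x a = 1"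
  using assms(2) umean_pos unfolding xdot_if_trait_payoffs_mean[OF assms(1)] mratio_def
  by (auto simp: field_simps)

lemma stationary_iff:
  assumes "0 \<le> r"
  shows "stationary n At u r x \<longleftrightarrow>
    (\<forall>d\<in>{1..n}. \<forall>t. marg n At x d t > 0 \<longrightarrow> utrait n At u x d t = U)
    \<and> (\<forall>a\<in>types n At. x a > 0 \<longrightarrow> (1 - r) * (upay n At u x a / U) + r * mratio n At x a = 1)"
    (is "_ \<longleftrightarrow> ?a \<and> ?b")
proof
  assume s: "stationary n At u r x"
  then have w: "\<forall>d\<in>{1..n}. \<forall>t. wtrait n At u x d t = U * marg n At x d t"
    using stationary_imp_trait_payoffs_mean by blast
  then show "?a \<and> ?b"
    using s xdot_eq_0_iff_type_condition[OF w] trait_payoffs_mean_iff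
    unfolding stationary_def by blast
next
  assume ab: "?a \<and> ?b"
  then have w: "\<forall>d\<in>{1..n}. \<forall>t. wtrait n At u x d t = U * marg n At x d t"
    using trait_payoffs_mean_iff by blast
  have "xdot n At u r x a \<ge> 0" if a: "a \<in> types n At" for a
  proof (cases "x a > 0")
    case True
    then have "xdot n At u r x a = 0"
      using xdot_eq_0_iff_type_condition[OF w True] ab a by blast
    then show ?thesis by simp
  next
    case False
    then have "x a = 0" using state_nonneg[OF a] by simp
    then show ?thesis unfolding xdot_if_trait_payoffs_mean[OF w]
      using assms marg_nonneg by (simp add: prod_nonneg)
  qed
  then show "stationary n At u r x"
    using sum_xdot_eq_0[of r] finite_types unfolding stationary_def
    by (subst (asm) sum_nonneg_eq_0_iff) auto
qed

end

theorem proposition2: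
  fixes n :: nat and At :: "nat \<Rightarrow> 't set"
    and u :: "(nat \<Rightarrow> 't) \<Rightarrow> (nat \<Rightarrow> 't) \<Rightarrow> real" and r :: real
  assumes n2: "n \<ge> 2"
    and fin: "\<forall>d\<in>{1..n}. finite (At d) \<and> At d \<noteq> {}"
    and upos: "\<forall>a\<in>types n At. \<forall>a'\<in>types n At. u a a' > 0"
    and r: "0 \<le> r" "r \<le> 1"
  shows
    "(\<forall>x. is_state n At x \<longrightarrow>
        (\<forall>d\<in>{1..n}. \<forall>t t'. marg n At x d t > 0 \<longrightarrow> marg n At x d t' > 0 \<longrightarrow>
           (utrait n At u x d t > utrait n At u x d t' \<longleftrightarrow>
            xdot_trait n At u r x d t / marg n At x d t >
            xdot_trait n At u r x d t' / marg n At x d t')))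
   \<and> (\<forall>x. is_state n At x \<longrightarrow>
        (stationary n At u r x \<longleftrightarrow>
           (\<forall>d\<in>{1..n}. \<forall>t. marg n At x d t > 0 \<longrightarrow> utrait n At u x d t = umean n At u x)
         \<and> (\<forall>a\<in>types n At. x a > 0 \<longrightarrow>
              (1 - r) * (upay n At u x a / umean n At u x) + r * mratio n At x a = 1)))"
proof (intro conjI allI impI)
  fix x
  assume "is_state n At x"
  then interpret recombinator_state n At u x
    using n2 fin upos by unfold_locales auto
  show "\<forall>d\<in>{1..n}. \<forall>t t'. marg n At x d t > 0 \<longrightarrow> marg n At x d t' > 0 \<longrightarrow>
      (utrait n At u x d t > utrait n At u x d t' \<longleftrightarrow>
       xdot_trait n At u r x d t / marg n At x d t > xdot_trait n At u r x d t' / marg n At x d t')"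
    using trait_payoff_monotone by blast
next
  fix x
  assume "is_state n At x"
  then interpret recombinator_state n At u x
    using n2 fin upos by unfold_locales auto
  show "stationary n At u r x \<longleftrightarrow>
      (\<forall>d\<in>{1..n}. \<forall>t. marg n At x d t > 0 \<longrightarrow> utrait n At u x d t = umean n At u x)
      \<and> (\<forall>a\<in>types n At. x a > 0 \<longrightarrow>
           (1 - r) * (upay n At u x a / umean n At u x) + r * mratio n At x a = 1)"
    using r(1) by (rule stationary_iff)
qed

end
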